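(* Fix an integer $d\ge 2$ and $\theta>0$. For the public goods game described in the context, with arbitrary real parameters $\mu_b,\mu_c,\sigma_b^2,\sigma_c^2,\sigma_{bc}$, we have $F>0$ if and only if $\sigma_{bc}-\sigma_c^2>2\mu_c$. In particular, this condition does not depend on $\theta$ or $d$. Moreover, $F$ is strictly decreasing in $\sigma_c^2$ and strictly increasing in $\sigma_{bc}$ when the other parameters are held fixed.
   Context: For integers $0\le k\le n$ and $\theta>0$ let $\psi_n^k=\frac{\prod_{i=1}^{k}(\theta+i-1)\prod_{j=1}^{n-k}(\theta+j-1)}{\prod_{l=1}^{n}(2\theta+l-1)}$ (empty products equal $1$). For real arrays $\mu_{C,k},\mu_{D,k},\sigma_{CC,kl},\sigma_{CD,kl},\sigma_{DD,kl}$ ($k,l=0,\ldots,d-1$) define $$F=\sum_{k=0}^{d-1}\binom{d-1}{k}\psi_{d+1}^{k+1}(\mu_{C,k}-\mu_{D,k})+\sum_{k,l=0}^{d-1}\binom{d-1}{k}\binom{d-1}{l}\Big[-\psi_{2d+1}^{k+l+2}(\sigma_{CC,kl}-\sigma_{CD,kl})+\psi_{2d+1}^{k+l+1}(\sigma_{DD,kl}-\sigma_{CD,kl})\Big].$$ Here $\mu_{C,k},\mu_{D,k}$ are the scaled means of the payoffs $a_k$ to a cooperator and $b_k$ to a defector having $k$ cooperating partners among $d-1$ in a group of size $d$, and $\sigma_{CC,kl},\sigma_{CD,kl},\sigma_{DD,kl}$ are the scaled second moments of $a_ka_l$, $a_kb_l$, $b_kb_l$ (each such expectation equals the scaled quantity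 times $\delta$ plus $o(\delta)$). In the paper's large-population weak-selection approximation, the average abundance of $C$ is $\tfrac12+\tfrac{\delta(1-u)}{u}F$, so weak selection favors the abundance of $C$ iff $F>0$. Public goods game: with random benefit $b$ and cost $c$ satisfying $E[b]=\mu_b\delta+o(\delta)$, $E[c]=\mu_c\delta+o(\delta)$, $E[b^2]=\sigma_b^2\delta+o(\delta)$, $E[c^2]=\sigma_c^2\delta+o(\delta)$, $E[bc]=\sigma_{bc}\delta+o(\delta)$, the payoffs are $a_k=\frac{k}{d-1}b-c$ and $b_k=\frac{k}{d-1}b$. Hence $\mu_{C,k}=\frac{k}{d-1}\mu_b-\mu_c$, $\mu_{D,k}=\frac{k}{d-1}\mu_b$, $\sigma_{CC,kl}=\frac{kl}{(d-1)^2}\sigma_b^2+\sigma_c^2-\frac{k+l}{d-1}\sigma_{bc}$, $\sigma_{CD,kl}=\frac{kl}{(d-1)^2}\sigma_b^2-\frac{l}{d-1}\sigma_{bc}$, $\sigma_{DD,kl}=\frac{kl}{(d-1)^2}\sigma_b^2$. *)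

theory Defs
  imports Complex_Main
begin

definition psi :: "real \<Rightarrow> nat \<Rightarrow> nat \<Rightarrow> real" where
  "psi \<theta> n k =
     (\<Prod>i=1..k. \<theta> + real i - 1) * (\<Prod>j=1..n-k. \<theta> + real j - 1)
     / (\<Prod>l=1..n. 2 * \<theta> + real l - 1)"

definition Fgen :: "real \<Rightarrow> nat \<Rightarrow> (nat \<Rightarrow> real) \<Rightarrow> (nat \<Rightarrow> real)
     \<Rightarrow> (nat \<Rightarrow> nat \<Rightarrow> real) \<Rightarrow> (nat \<Rightarrow> nat \<Rightarrow> real) \<Rightarrow> (nat \<Rightarrow> nat \<Rightarrow> real) \<Rightarrow> real" where
  "Fgen \<theta> d muC muD sCC sCD sDD =
     (\<Sum>k=0..d-1. real ((d-1) choose k) * psi \<theta> (d+1) (k+1) * (muC k - muD k))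
   + (\<Sum>k=0..d-1. \<Sum>l=0..d-1. real ((d-1) choose k) * real ((d-1) choose l) *
        (- psi \<theta> (2*d+1) (k+l+2) * (sCC k l - sCD k l)
         + psi \<theta> (2*d+1) (k+l+1) * (sDD k l - sCD k l)))"

definition F_pgg :: "real \<Rightarrow> nat \<Rightarrow> real \<Rightarrow> real \<Rightarrow> real \<Rightarrow> real \<Rightarrow> real \<Rightarrow> real" where
  "F_pgg \<theta> d mub muc sb2 sc2 sbc =
     Fgen \<theta> d
       (\<lambda>k. real k / real (d-1) * mub - muc)
       (\<lambda>k. real k / real (d-1) * mub)
       (\<lambda>k l. real k * real l / (real (d-1))^2 * sb2 + sc2 - (real k + real l) / real (d-1) * sbc)
       (\<lambda>k l. real k * real l / (real (d-1))^2 * sb2 - real l / real (d-1) * sbc)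
       (\<lambda>k l. real k * real l / (real (d-1))^2 * sb2)"

end

theory Submission
  imports Defs
begin

text \<open>
  \<open>\<psi>\<^sub>n\<^sup>k\<close> is the moment \<open>E[X\<^sup>k (1 - X)\<^sup>n\<^sup>-\<^sup>k]\<close> of a \<open>Beta(\<theta>, \<theta>)\<close> variable \<open>X\<close>.
  Since \<open>X + (1 - X) = 1\<close>, these moments satisfy the Pascal-type recurrence
  \<open>m(a, b) = m(a + 1, b) + m(a, b + 1)\<close>, so every binomially weighted sum of them
  occurring in \<open>F\<close> collapses to a low-order moment. For the public goods game this gives
  \<open>F = m(2, 1) (\<sigma>\<^sub>b\<^sub>c - \<sigma>\<^sub>c\<^sup>2 - 2\<mu>\<^sub>c)\<close> with \<open>m(2, 1) > 0\<close>.
\<close>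

lemma sum_choose_Suc_pascal:
  fixes f :: "nat \<Rightarrow> 'a::comm_semiring_1"
  shows "(\<Sum>k\<le>Suc n. of_nat (Suc n choose k) * f k) =
         (\<Sum>k\<le>n. of_nat (n choose k) * (f k + f (Suc k)))"
proof -
  have "(\<Sum>k\<le>Suc n. of_nat (Suc n choose k) * f k) =
        f 0 + (\<Sum>k\<le>n. of_nat (n choose Suc k) * f (Suc k)) + (\<Sum>k\<le>n. of_nat (n choose k) * f (Suc k))"
    by (subst sum.atMost_Suc_shift) (simp add: sum.distrib distrib_right add_ac)
  also have "f 0 + (\<Sum>k\<le>n. of_nat (n choose Suc k) * f (Suc k)) = (\<Sum>k\<le>n. of_nat (n choose k) * f k)"
    using sum.atMost_Suc_shift[of "\<lambda>k. of_nat (n choose k) * f k" n] by (simp add: binomial_eq_0)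
  finally show ?thesis by (simp add: sum.distrib distrib_left)
qed

lemma binomial_sum_collapse:
  fixes g :: "nat \<Rightarrow> nat \<Rightarrow> 'a::comm_semiring_1"
  assumes split: "\<And>a b. g a b = g (Suc a) b + g a (Suc b)"
  shows "(\<Sum>k\<le>n. of_nat (n choose k) * g (k + a) (n - k + b)) = g a b"
proof (induction n arbitrary: a b)
  case 0
  then show ?case by simp
next
  case (Suc n a b)
  have "(\<Sum>k\<le>Suc n. of_nat (Suc n choose k) * g (k + a) (Suc n - k + b)) =
        (\<Sum>k\<le>n. of_nat (n choose k) * (g (k + a) (n - k + Suc b) + g (k + Suc a) (n - k + b)))"
    unfolding sum_choose_Suc_pascal by (intro sum.cong refl) (simp add: Suc_diff_le)
  also have "\<dots> = g a (Suc b) + g (Suc a) b"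
    unfolding distrib_left sum.distrib Suc.IH ..
  finally show ?case
    using split[of a b] by (simp add: add.commute)
qed

lemma binomial_sum_collapse_weighted:
  fixes g :: "nat \<Rightarrow> nat \<Rightarrow> 'a::comm_semiring_1"
  assumes split: "\<And>a b. g a b = g (Suc a) b + g a (Suc b)"
  shows "(\<Sum>k\<le>n. of_nat (n choose k) * of_nat k * g (k + a) (n - k + b)) = of_nat n * g (Suc a) b"
proof (cases n)
  case 0
  then show ?thesis by simp
next
  case (Suc m)
  have "(\<Sum>k\<le>Suc m. of_nat (Suc m choose k) * of_nat k * g (k + a) (Suc m - k + b)) =
        (\<Sum>k\<le>m. of_nat (Suc m choose Suc k) * of_nat (Suc k) * g (Suc k + a) (Suc m - Suc k + b))"
    by (subst sum.atMost_Suc_shift) simp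
  also have "\<dots> = (\<Sum>k\<le>m. of_nat (Suc m) * (of_nat (m choose k) * g (k + Suc a) (m - k + b)))"
  proof (intro sum.cong refl)
    fix k
    have "of_nat (Suc m choose Suc k) * of_nat (Suc k) = (of_nat (Suc m) * of_nat (m choose k) :: 'a)"
      by (metis Suc_times_binomial_eq of_nat_mult)
    then show "of_nat (Suc m choose Suc k) * of_nat (Suc k) * g (Suc k + a) (Suc m - Suc k + b) =
               of_nat (Suc m) * (of_nat (m choose k) * g (k + Suc a) (m - k + b))"
      by (simp add: ac_simps)
  qed
  also have "\<dots> = of_nat (Suc m) * g (Suc a) b"
    by (simp only: sum_distrib_left[symmetric] binomial_sum_collapse[of g, OF split])
  finally show ?thesis using Suc by simp
qed

lemma binomial_double_sum_collapse:
  fixes g :: "nat \<Rightarrow> nat \<Rightarrow> 'a::comm_semiring_1"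
  assumes split: "\<And>a b. g a b = g (Suc a) b + g a (Suc b)"
  shows "(\<Sum>k\<le>n. \<Sum>l\<le>n. of_nat (n choose k) * of_nat (n choose l) * w k * g (k + l + a) (2*n - (k + l) + b)) =
         (\<Sum>k\<le>n. of_nat (n choose k) * w k * g (k + a) (n - k + b))"
proof (intro sum.cong refl)
  fix k assume "k \<in> {..n}"
  then have "(\<Sum>l\<le>n. of_nat (n choose k) * of_nat (n choose l) * w k * g (k + l + a) (2*n - (k + l) + b)) =
             of_nat (n choose k) * w k * (\<Sum>l\<le>n. of_nat (n choose l) * g (l + (k + a)) (n - l + (n - k + b)))"
    unfolding sum_distrib_left by (intro sum.cong refl) (simp add: mult_2 mult_2_right ac_simps)
  also have "\<dots> = of_nat (n choose k) * w k * g (k + a) (n - k + b)"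
    by (simp only: binomial_sum_collapse[of g, OF split])
  finally show "(\<Sum>l\<le>n. of_nat (n choose k) * of_nat (n choose l) * w k * g (k + l + a) (2*n - (k + l) + b)) =
                of_nat (n choose k) * w k * g (k + a) (n - k + b)" .
qed

lemma prod_shifted_eq_pochhammer:
  "(\<Prod>i=1..n. x + of_nat i - 1) = pochhammer (x :: 'a::comm_ring_1) n"
  by (induction n) (simp_all add: pochhammer_Suc prod.nat_ivl_Suc' mult.commute)

definition beta_moment :: "real \<Rightarrow> nat \<Rightarrow> nat \<Rightarrow> real" where
  "beta_moment \<theta> a b = pochhammer \<theta> a * pochhammer \<theta> b / pochhammer (2 * \<theta>) (a + b)"

lemma psi_eq_beta_moment: "k \<le> n \<Longrightarrow> psi \<theta> n k = beta_moment \<theta> k (n - k)"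
  unfolding psi_def beta_moment_def prod_shifted_eq_pochhammer by simp

lemma beta_moment_pos: "\<theta> > 0 \<Longrightarrow> beta_moment \<theta> a b > 0"
  unfolding beta_moment_def by (simp add: pochhammer_pos)

lemma beta_moment_commute: "beta_moment \<theta> a b = beta_moment \<theta> b a"
  unfolding beta_moment_def by (simp add: add.commute mult.commute)

lemma beta_moment_split:
  assumes "\<theta> > 0"
  shows "beta_moment \<theta> a b = beta_moment \<theta> (Suc a) b + beta_moment \<theta> a (Suc b)"
proof -
  define P where "P = pochhammer \<theta> a * pochhammer \<theta> b"
  define Q where "Q = pochhammer (2 * \<theta>) (a + b)"
  define s where "s = 2 * \<theta> + real (a + b)"
  have "s > 0" using assms by (simp add: s_def)
  have "beta_moment \<theta> (Suc a) b + beta_moment \<theta> a (Suc b) = P * (\<theta> + a) / (Q * s) + P * (\<theta> + b) / (Q * s)"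
    unfolding beta_moment_def P_def Q_def s_def by (simp add: pochhammer_Suc ac_simps)
  also have "\<dots> = P * s / (Q * s)"
    by (simp add: s_def add_divide_distrib[symmetric] algebra_simps)
  also have "\<dots> = beta_moment \<theta> a b"
    using \<open>s > 0\<close> by (simp add: beta_moment_def P_def Q_def)
  finally show ?thesis ..
qed

lemma F_pgg_eq_moment_sums:
  fixes \<theta> :: real and n :: nat
  defines "m \<equiv> beta_moment \<theta>"
  shows "F_pgg \<theta> (Suc n) mub muc sb2 sc2 sbc =
     - muc * (\<Sum>k\<le>n. real (n choose k) * m (k + 1) (n - k + 1))
     - sc2 * (\<Sum>k\<le>n. \<Sum>l\<le>n. real (n choose k) * real (n choose l) * m (k + l + 2) (2*n - (k + l) + 1))
     + sbc / real n *
       ((\<Sum>k\<le>n. \<Sum>l\<le>n. real (n choose k) * real (n choose l) * real k * m (k + l + 2) (2*n - (k + l) + 1))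
      + (\<Sum>k\<le>n. \<Sum>l\<le>n. real (n choose k) * real (n choose l) * real l * m (k + l + 1) (2*n - (k + l) + 2)))"
proof -
  have psi1: "psi \<theta> (Suc n + 1) (k + 1) = m (k + 1) (n - k + 1)" if "k \<le> n" for k
    using that by (simp add: psi_eq_beta_moment m_def Suc_diff_le)
  have psi2: "psi \<theta> (2 * Suc n + 1) (k + l + 2) = m (k + l + 2) (2*n - (k + l) + 1)"
    and psi3: "psi \<theta> (2 * Suc n + 1) (k + l + 1) = m (k + l + 1) (2*n - (k + l) + 2)"
    if "k \<le> n" "l \<le> n" for k l
  proof -
    have "k + l \<le> 2 * n" using that by simp
    then show "psi \<theta> (2 * Suc n + 1) (k + l + 2) = m (k + l + 2) (2*n - (k + l) + 1)"
      and "psi \<theta> (2 * Suc n + 1) (k + l + 1) = m (k + l + 1) (2*n - (k + l) + 2)"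
      by (simp_all add: psi_eq_beta_moment m_def Suc_diff_le)
  qed
  have "F_pgg \<theta> (Suc n) mub muc sb2 sc2 sbc =
     (\<Sum>k\<le>n. real (n choose k) * m (k + 1) (n - k + 1) * (- muc))
   + (\<Sum>k\<le>n. \<Sum>l\<le>n. - sc2 * (real (n choose k) * real (n choose l) * m (k + l + 2) (2*n - (k + l) + 1))
       + sbc / real n * (real (n choose k) * real (n choose l) * real k * m (k + l + 2) (2*n - (k + l) + 1))
       + sbc / real n * (real (n choose k) * real (n choose l) * real l * m (k + l + 1) (2*n - (k + l) + 2)))"
    unfolding F_pgg_def Fgen_def atLeast0AtMost diff_Suc_1
    by (intro arg_cong2[where f = "(+)"] sum.cong refl; simp only: atMost_iff psi1 psi2 psi3)
       (simp_all add: algebra_simps diff_divide_distrib add_divide_distrib)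
  then show ?thesis
    by (simp only: sum.distrib flip: sum_distrib_left sum_distrib_right) (simp add: algebra_simps)
qed

lemma F_pgg_eq:
  assumes "\<theta> > 0" and "n \<ge> 1"
  shows "F_pgg \<theta> (Suc n) mub muc sb2 sc2 sbc = beta_moment \<theta> 2 1 * (sbc - sc2 - 2 * muc)"
proof -
  define m where "m = beta_moment \<theta>"
  have split: "\<And>a b. m a b = m (Suc a) b + m a (Suc b)"
    unfolding m_def using beta_moment_split[OF assms(1)] .
  have S1: "(\<Sum>k\<le>n. real (n choose k) * m (k + 1) (n - k + 1)) = m 1 1"
    using binomial_sum_collapse[of m, OF split, of n 1 1] by simp
  have S2: "(\<Sum>k\<le>n. \<Sum>l\<le>n. real (n choose k) * real (n choose l) * m (k + l + 2) (2*n - (k + l) + 1))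
            = m 2 1"
    using binomial_double_sum_collapse[of m, OF split, of n "\<lambda>_. 1" 2 1]
          binomial_sum_collapse[of m, OF split, of n 2 1] by simp
  have S3: "(\<Sum>k\<le>n. \<Sum>l\<le>n. real (n choose k) * real (n choose l) * real k * m (k + l + 2) (2*n - (k + l) + 1))
            = real n * m 3 1"
    using binomial_double_sum_collapse[of m, OF split, of n real 2 1]
          binomial_sum_collapse_weighted[of m, OF split, of n 2 1] by (simp add: numeral_3_eq_3)
  have S4: "(\<Sum>k\<le>n. \<Sum>l\<le>n. real (n choose k) * real (n choose l) * real l * m (k + l + 1) (2*n - (k + l) + 2))
            = real n * m 2 2"
  proof -
    have "(\<Sum>k\<le>n. \<Sum>l\<le>n. real (n choose k) * real (n choose l) * real l * m (k + l + 1) (2*n - (k + l) + 2))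
        = (\<Sum>l\<le>n. \<Sum>k\<le>n. real (n choose l) * real (n choose k) * real l * m (l + k + 1) (2*n - (l + k) + 2))"
      by (subst sum.swap) (simp add: ac_simps)
    then show ?thesis
      using binomial_double_sum_collapse[of m, OF split, of n real 1 2]
            binomial_sum_collapse_weighted[of m, OF split, of n 1 2] by (simp add: numeral_2_eq_2)
  qed
  have "m 1 1 = 2 * m 2 1"
    using split[of 1 1] beta_moment_commute[of \<theta> 1 2] by (simp add: m_def numeral_2_eq_2)
  moreover have "m 2 1 = m 3 1 + m 2 2"
    using split[of 2 1] by (simp add: numeral_2_eq_2 numeral_3_eq_3)
  ultimately show ?thesis
    using assms(2) unfolding F_pgg_eq_moment_sums S1 S2 S3 S4 m_def[symmetric]
    by (simp add: field_simps)
qed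

theorem mainTheorem3:
  fixes \<theta> :: real and d :: nat
  assumes "d \<ge> 2" and "\<theta> > 0"
  shows "(\<forall>mub muc sb2 sc2 sbc :: real.
            F_pgg \<theta> d mub muc sb2 sc2 sbc > 0 \<longleftrightarrow> sbc - sc2 > 2 * muc)
       \<and> (\<forall>mub muc sb2 sbc s s' :: real. s < s' \<longrightarrow>
            F_pgg \<theta> d mub muc sb2 s' sbc < F_pgg \<theta> d mub muc sb2 s sbc)
       \<and> (\<forall>mub muc sb2 sc2 s s' :: real. s < s' \<longrightarrow>
            F_pgg \<theta> d mub muc sb2 sc2 s < F_pgg \<theta> d mub muc sb2 sc2 s')"
proof -
  obtain n where d: "d = Suc n" and n: "n \<ge> 1"
    using assms(1) by (cases d) auto
  have "beta_moment \<theta> 2 1 > 0"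
    using beta_moment_pos[OF assms(2)] .
  then show ?thesis
    unfolding d F_pgg_eq[OF assms(2) n]
    by (auto simp: zero_less_mult_iff mult_less_cancel_left_pos)
qed

end
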